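(* Let $R$ be a commutative ring and $r\ge2$. Let $b^+=(b_1,\ldots,b_r)^t\in R^r$ be a unimodular column and let $b^-=(b_{-r},\ldots,b_{-1})^t\in R^r$ be a column such that $\sum_{i=1}^rb_ib_{-i}=0$. Then there exists $M\in\Theta(r,R)$ such that $b^-=Mb^+$.
   Context: A column is unimodular if its entries generate the unit ideal. For an $r\times r$ matrix $g$ with rows and columns indexed $1,\ldots,r$, its antidiagonal transpose $g^{\tau}$ has entries $(g^\tau)_{i,j}=g_{r+1-j,r+1-i}$. $\Theta(r,R)$ is the set of $r\times r$ matrices $M$ over $R$ with $M^{\tau}=-M$ and all antidiagonal entries $M_{i,r+1-i}$ equal to zero. Note the entries of $b^-$ are listed in the order $b_{-r},\ldots,b_{-1}$. *)

theory Defs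
  imports Main
begin

text \<open>Columns in R^r are functions nat => 'a, using the entries at indices 1..r.
  r x r matrices are functions nat => nat => 'a, using entries (i,j) with 1 <= i,j <= r.\<close>

definition unimodular :: "nat \<Rightarrow> (nat \<Rightarrow> 'a::comm_ring_1) \<Rightarrow> bool" where
  "unimodular r b \<longleftrightarrow> (\<exists>c. (\<Sum>i=1..r. c i * b i) = 1)"

definition antidiag_transpose :: "nat \<Rightarrow> (nat \<Rightarrow> nat \<Rightarrow> 'a) \<Rightarrow> (nat \<Rightarrow> nat \<Rightarrow> 'a)" where
  "antidiag_transpose r g = (\<lambda>i j. g (r + 1 - j) (r + 1 - i))"

definition Theta :: "nat \<Rightarrow> (nat \<Rightarrow> nat \<Rightarrow> 'a::comm_ring_1) set" where
  "Theta r = {M. (\<forall>i\<in>{1..r}. \<forall>j\<in>{1..r}. antidiag_transpose r M i j = - M i j)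
                \<and> (\<forall>i\<in>{1..r}. M i (r + 1 - i) = 0)}"

definition mat_vec :: "nat \<Rightarrow> (nat \<Rightarrow> nat \<Rightarrow> 'a::comm_ring_1) \<Rightarrow> (nat \<Rightarrow> 'a) \<Rightarrow> nat \<Rightarrow> 'a" where
  "mat_vec r M v = (\<lambda>i. \<Sum>j=1..r. M i j * v j)"

end

theory Submission
  imports Defs
begin

text \<open>Pick \<open>c\<close> with \<open>c\<^sup>t b\<^sup>+ = 1\<close> and put \<open>N = b\<^sup>- c\<^sup>t\<close>. Every matrix of the form
  \<open>N - N\<^sup>\<tau>\<close> lies in \<open>\<Theta>(r,R)\<close>, and \<open>(N - N\<^sup>\<tau>) b\<^sup>+ = b\<^sup>- (c\<^sup>t b\<^sup>+) - c\<^sup>\<tau> (\<Sum>\<^sub>j b\<^sub>j b\<^sub>-\<^sub>j) = b\<^sup>-\<close>,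
  where \<open>c\<^sup>\<tau>\<close> is \<open>c\<close> read backwards.\<close>

lemma antidiag_transpose_antidiag_transpose:
  assumes "i \<in> {1..r}" "j \<in> {1..r}"
  shows "antidiag_transpose r (antidiag_transpose r N) i j = N i j"
  using assms by (simp add: antidiag_transpose_def)

lemma diff_antidiag_transpose_in_Theta:
  fixes N :: "nat \<Rightarrow> nat \<Rightarrow> 'a::comm_ring_1"
  shows "(\<lambda>i j. N i j - antidiag_transpose r N i j) \<in> Theta r"
  unfolding Theta_def
proof (intro CollectI conjI ballI)
  fix i j assume "i \<in> {1..r}" "j \<in> {1..r}"
  then show "antidiag_transpose r (\<lambda>i j. N i j - antidiag_transpose r N i j) i j
      = - (N i j - antidiag_transpose r N i j)"
    using antidiag_transpose_antidiag_transpose[of i r j N]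
    by (simp add: antidiag_transpose_def)
next
  fix i assume "i \<in> {1..r}"
  then show "N i (r + 1 - i) - antidiag_transpose r N i (r + 1 - i) = 0"
    by (simp add: antidiag_transpose_def)
qed

lemma mat_vec_diff:
  "mat_vec r (\<lambda>i j. A i j - B i j) v i = mat_vec r A v i - mat_vec r B v i"
  by (simp add: mat_vec_def left_diff_distrib sum_subtractf)

lemma mat_vec_outer_product:
  "mat_vec r (\<lambda>i j. u i * c j) v i = u i * (\<Sum>j=1..r. c j * v j)"
  by (simp add: mat_vec_def sum_distrib_left mult.assoc)

lemma mat_vec_antidiag_transpose_outer_product:
  "mat_vec r (antidiag_transpose r (\<lambda>i j. u i * c j)) v i
    = c (r + 1 - i) * (\<Sum>j=1..r. v j * u (r + 1 - j))"
  by (simp add: mat_vec_def antidiag_transpose_def sum_distrib_left algebra_simps)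

theorem lemma9:
  fixes r :: nat and bp bm :: "nat \<Rightarrow> 'a::comm_ring_1"
  assumes "r \<ge> 2"
    and "unimodular r bp"
    and "(\<Sum>i=1..r. bp i * bm (r + 1 - i)) = 0"
  shows "\<exists>M \<in> Theta r. \<forall>i\<in>{1..r}. bm i = mat_vec r M bp i"
proof -
  obtain c where c: "(\<Sum>i=1..r. c i * bp i) = 1"
    using assms(2) unfolding unimodular_def by blast
  define N where "N = (\<lambda>i j. bm i * c j)"
  have "bm i = mat_vec r (\<lambda>i j. N i j - antidiag_transpose r N i j) bp i" for i
    unfolding mat_vec_diff N_def mat_vec_outer_product mat_vec_antidiag_transpose_outer_product
    using c assms(3) by simp
  then show ?thesis
    using diff_antidiag_transpose_in_Theta by blast
qed

end
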